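(* Consider a source $S$, a destination $D$, two relays $R_1,R_2$, independent Rayleigh link amplitude processes $a_{AB}(t)$ with $E[a_{AB}^2]=\Omega_{AB}>0$ and maximum Doppler frequencies $\mathcal{F}_{AB}>0$ for $AB\in\{SR_1,R_1D,SR_2,R_2D\}$, and let $a_i(t)=\min(a_{SR_i}(t),a_{R_iD}(t))$, $\Omega_i=\Omega_{SR_i}\Omega_{R_iD}/(\Omega_{SR_i}+\Omega_{R_iD})$. Let $\Gamma>0$ be the common transmit SNR and $T>0$ the switching threshold, and operate the DSSC-B protocol described in the context. Put \[ c_i=\sqrt{\tfrac{T}{\Gamma\Omega_{SR_i}}}\,\mathcal{F}_{SR_i}+\sqrt{\tfrac{T}{\Gamma\Omega_{R_iD}}}\,\mathcal{F}_{R_iD},\quad i\in\{1,2\},\qquad E=e^{-\frac{T(\Omega_1+\Omega_2)}{\Gamma\Omega_1\Omega_2}}, \] \[ \Delta=2e^{\frac{T}{\Gamma\Omega_1}}-e^{\frac{2T}{\Gamma\Omega_1}}+2e^{\frac{T}{\Gamma\Omega_2}}-e^{\frac{2T}{\Gamma\Omega_2}}-2e^{\frac{T(\Omega_1+\Omega_2)}{\Gamma\Omega_1\Omega_2}}+e^{\frac{T(\Omega_1+2\Omega_2)}{\Gamma\Omega_1\Omega_2}}+e^{\frac{T(2\Omega_1+\Omega_2)}{\Gamma\Omega_1\Omega_2}}-2. \] Then the relay switching rate of DSSC-B is \[ SR_{DSSC}(T)=\frac{\sqrt{2\pi}}{\Delta}\Big[E\big(e^{\frac{2T}{\Gamma\Omega_2}}-e^{\frac{T}{\Gamma\Omega_2}}\big)c_1+E\big(e^{\frac{2T}{\Gamma\Omega_1}}-e^{\frac{T}{\Gamma\Omega_1}}\big)c_2+(c_1+c_2)\big(e^{\frac{T}{\Gamma\Omega_1}}-1\big)\big(e^{\frac{T}{\Gamma\Omega_2}}-1\big)\Big].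 \]
   Context: Fading model: each link amplitude $a_{AB}(t)$ is Rayleigh with density $\frac{2x}{\Omega_{AB}}e^{-x^2/\Omega_{AB}}$; its time derivative is, at each time, zero-mean Gaussian with standard deviation $\pi\mathcal{F}_{AB}\sqrt{\Omega_{AB}}$ and independent of $a_{AB}(t)$; links are independent. DSSC-B protocol (distributed switch-and-stay, variant B): one relay $R_b$ is active at a time; with $a_i^j$ the value of $a_i$ in transmission period $j$, if $R_b^j=R_1$ then $R_b^{j+1}=R_2$ exactly when $a_1^{j-1}>\sqrt{T/\Gamma}$ and $a_1^j<\sqrt{T/\Gamma}$, and otherwise $R_b^{j+1}=R_1$; symmetrically with the roles of $R_1,R_2$ exchanged. Equivalently, a switch to the other relay occurs exactly when the active branch's $a_b(t)$ crosses the level $\sqrt{T/\Gamma}$ in the downward direction; after a switch the system stays with the new relay regardless of its level until that relay's $a_b$ down-crosses $\sqrt{T/\Gamma}$. The relay switching rate is the expected number of relay switchings per second. *)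

theory Defs
  imports "HOL-Probability.Probability"
begin

text \<open>Relays and hops. A link AB is identified by a relay i and a hop (S to R_i, or R_i to D).\<close>
datatype relay = R1 | R2
datatype hop = SR | RD

fun other :: "relay \<Rightarrow> relay" where
  "other R1 = R2" | "other R2 = R1"

lemma UNIV_relay: "(UNIV :: relay set) = {R1, R2}"
  using relay.exhaust by auto

instance relay :: finite
  by standard (simp add: UNIV_relay)

definition rayleigh_density :: "real \<Rightarrow> real \<Rightarrow> real" where
  "rayleigh_density \<Omega> x = (if 0 \<le> x then 2 * x / \<Omega> * exp (- x\<^sup>2 / \<Omega>) else 0)"

text \<open>Joint law of (a_AB(t), a_AB'(t)) at a fixed time t: Rayleigh amplitude, independent
  zero-mean Gaussian derivative with standard deviation pi * F * sqrt Omega.\<close>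
definition link_law :: "real \<Rightarrow> real \<Rightarrow> (real \<times> real) measure" where
  "link_law \<Omega> F = density lborel (rayleigh_density \<Omega>)
      \<Otimes>\<^sub>M density lborel (normal_density 0 (pi * F * sqrt \<Omega>))"

text \<open>Joint law of (a_i(t), a_i'(t)) where a_i = min(a_SRi, a_RiD) (independent links);
  the derivative of the minimum is the derivative of the currently smaller branch.\<close>
definition relay_law :: "(relay \<Rightarrow> hop \<Rightarrow> real) \<Rightarrow> (relay \<Rightarrow> hop \<Rightarrow> real) \<Rightarrow> relay
    \<Rightarrow> (real \<times> real) measure" where
  "relay_law \<Omega> F i =
     distr (link_law (\<Omega> i SR) (F i SR) \<Otimes>\<^sub>M link_law (\<Omega> i RD) (F i RD)) borel
       (\<lambda>((x1, y1), (x2, y2)). (min x1 x2, if x1 \<le> x2 then y1 else y2))"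

text \<open>Level crossing rate (expected number of downward crossings of level r per second),
  Rice's formula: the derivative in r of E[ max(0, -a'(t)) ; a(t) \<le> r ].\<close>
definition down_lcr :: "(real \<times> real) measure \<Rightarrow> real \<Rightarrow> real" where
  "down_lcr L r = deriv (\<lambda>s. \<integral>p. indicator {..s} (fst p) * max 0 (- snd p) \<partial>L) r"

definition above_prob :: "(relay \<Rightarrow> hop \<Rightarrow> real) \<Rightarrow> (relay \<Rightarrow> hop \<Rightarrow> real) \<Rightarrow> real
    \<Rightarrow> relay \<Rightarrow> real" where
  "above_prob \<Omega> F th i = measure (relay_law \<Omega> F i) {p. fst p > th}"

text \<open>DSSC-B decision rule: with active relay b, previous-period indicator s = [a_b^(j-1) > th]
  and current indicator s' = [a_b^j > th], the next active relay.\<close>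
definition dssc_next :: "relay \<Rightarrow> bool \<Rightarrow> bool \<Rightarrow> relay" where
  "dssc_next b s s' = (if s \<and> \<not> s' then other b else b)"

text \<open>State (b, s1, s2): b = R_b^(j+1) (relay active in
  the next period) and s_k = [a_k^j > th]; samples in different periods and of different relays
  are independent.\<close>
type_synonym dssc_state = "relay \<times> bool \<times> bool"

definition bern :: "real \<Rightarrow> bool \<Rightarrow> real" where
  "bern q s = (if s then q else 1 - q)"

definition ind :: "relay \<Rightarrow> bool \<times> bool \<Rightarrow> bool" where
  "ind b s = (case b of R1 \<Rightarrow> fst s | R2 \<Rightarrow> snd s)"

definition dssc_trans :: "(relay \<Rightarrow> real) \<Rightarrow> dssc_state \<Rightarrow> dssc_state \<Rightarrow> real" where
  "dssc_trans q x y =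
     (let (b, s) = x; (b', s') = y in
        bern (q R1) (fst s') * bern (q R2) (snd s') *
        (if b' = dssc_next b (ind b s) (ind b s') then 1 else 0))"

definition dssc_stationary ::
  "(relay \<Rightarrow> hop \<Rightarrow> real) \<Rightarrow> (relay \<Rightarrow> hop \<Rightarrow> real) \<Rightarrow> real \<Rightarrow> real \<Rightarrow> (dssc_state \<Rightarrow> real) \<Rightarrow> bool" where
  "dssc_stationary \<Omega> F \<Gamma> T \<pi> \<longleftrightarrow>
     (\<forall>x. 0 \<le> \<pi> x) \<and> (\<Sum>x\<in>UNIV. \<pi> x) = 1 \<and>
     (\<forall>y. \<pi> y = (\<Sum>x\<in>UNIV. \<pi> x * dssc_trans (above_prob \<Omega> F (sqrt (T / \<Gamma>))) x y))"

text \<open>Relay switching rate: switches occur exactly at down-crossings of sqrt(T/Gamma) by the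
  active branch, so the rate is sum over b of P(R_b active) times the down-crossing rate of a_b.\<close>
definition dssc_switching_rate ::
  "(relay \<Rightarrow> hop \<Rightarrow> real) \<Rightarrow> (relay \<Rightarrow> hop \<Rightarrow> real) \<Rightarrow> real \<Rightarrow> real \<Rightarrow> (dssc_state \<Rightarrow> real) \<Rightarrow> real" where
  "dssc_switching_rate \<Omega> F \<Gamma> T \<pi> =
     (\<Sum>b\<in>UNIV. (\<Sum>s\<in>UNIV. \<pi> (b, s)) * down_lcr (relay_law \<Omega> F b) (sqrt (T / \<Gamma>)))"

end

theory Submission
  imports Defs "HOL-Real_Asymp.Real_Asymp"
begin

(* Switches happen exactly at down-crossings of sqrt(T/\<Gamma>) by the active branch, so the
   switching rate is the sum over b of P(R_b active) times the level crossing rate of a_b.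
   The branch a_b = min(a_SRb, a_RbD) has tail exp(-x^2/\<Omega>_b), the product of two Rayleigh
   tails, and Rice's integral E[(a_b')^-; a_b \<le> s] splits according to which link is the
   smaller one; differentiating in s gives the crossing rate sqrt(2 pi) c_b exp(-T/(\<Gamma> \<Omega>_b)).
   The activity probabilities come from the stationary law of the 8-state chain: aggregating
   states by the next relay and by the current sample of its branch leaves a small linear
   system in the probabilities 1/e_b = P(a_b > sqrt(T/\<Gamma>)), whose solution gives
   P(R_1 active) = (e_2 - 1)(e_1^2 - e_1 + 1)/d with d = (e_1 - 1)(e_2 - 1)(e_1 + e_2) + e_1 + e_2 - 2,
   and symmetrically for R_2. *)

subsection \<open>Rayleigh and Gaussian integrals\<close>

lemma rayleigh_density_nonneg: "\<Omega> > 0 \<Longrightarrow> 0 \<le> rayleigh_density \<Omega> x"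
  by (simp add: rayleigh_density_def)

lemma borel_measurable_rayleigh_density[measurable]: "rayleigh_density \<Omega> \<in> borel_measurable borel"
  unfolding rayleigh_density_def by measurable

definition rayleigh_ccdf :: "real \<Rightarrow> real \<Rightarrow> real" where
  "rayleigh_ccdf \<Omega> x = (if 0 \<le> x then exp (- x\<^sup>2 / \<Omega>) else 1)"

lemma rayleigh_ccdf_nonneg: "0 \<le> rayleigh_ccdf \<Omega> x"
  by (simp add: rayleigh_ccdf_def)

lemma borel_measurable_rayleigh_ccdf[measurable]: "rayleigh_ccdf \<Omega> \<in> borel_measurable borel"
  unfolding rayleigh_ccdf_def by measurable

definition rayleigh_min_scale :: "real \<Rightarrow> real \<Rightarrow> real" where
  "rayleigh_min_scale \<Omega>A \<Omega>B = \<Omega>A * \<Omega>B / (\<Omega>A + \<Omega>B)"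

lemma rayleigh_min_scale_pos: "\<Omega>A > 0 \<Longrightarrow> \<Omega>B > 0 \<Longrightarrow> rayleigh_min_scale \<Omega>A \<Omega>B > 0"
  by (simp add: rayleigh_min_scale_def)

lemma rayleigh_min_scale_commute: "rayleigh_min_scale \<Omega>A \<Omega>B = rayleigh_min_scale \<Omega>B \<Omega>A"
  by (simp add: rayleigh_min_scale_def ac_simps)

lemma exp_rayleigh_min_scale:
  assumes "\<Omega>A > 0" "\<Omega>B > 0"
  shows "exp (- (x\<^sup>2 / \<Omega>A)) * exp (- (x\<^sup>2 / \<Omega>B)) = exp (- (x\<^sup>2 / rayleigh_min_scale \<Omega>A \<Omega>B))"
  using assms by (simp add: rayleigh_min_scale_def exp_add[symmetric] field_simps)

lemma rayleigh_ccdf_mult: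
  "\<Omega>A > 0 \<Longrightarrow> \<Omega>B > 0 \<Longrightarrow>
    rayleigh_ccdf \<Omega>A x * rayleigh_ccdf \<Omega>B x = rayleigh_ccdf (rayleigh_min_scale \<Omega>A \<Omega>B) x"
  by (simp add: rayleigh_ccdf_def exp_rayleigh_min_scale)

lemma nn_integral_rayleigh_atLeast:
  assumes "\<Omega> > 0"
  shows "(\<integral>\<^sup>+x. ennreal (rayleigh_density \<Omega> x) * indicator {a..} x \<partial>lborel) = ennreal (rayleigh_ccdf \<Omega> a)"
proof -
  define a0 where "a0 = max a 0"
  have "(\<integral>\<^sup>+x. ennreal (rayleigh_density \<Omega> x) * indicator {a..} x \<partial>lborel) =
        (\<integral>\<^sup>+x. ennreal (rayleigh_density \<Omega> x) * indicator {a0..} x \<partial>lborel)"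
    by (intro nn_integral_cong) (auto simp: a0_def rayleigh_density_def split: split_indicator)
  also have "\<dots> = ennreal (0 - (- exp (- a0\<^sup>2 / \<Omega>)))"
  proof (rule nn_integral_FTC_atLeast)
    fix x assume "a0 \<le> x"
    then show "DERIV (\<lambda>x. - exp (- x\<^sup>2 / \<Omega>)) x :> rayleigh_density \<Omega> x"
      using assms unfolding rayleigh_density_def a0_def
      by (auto intro!: derivative_eq_intros simp: field_simps power2_eq_square)
    show "0 \<le> rayleigh_density \<Omega> x" using assms by (rule rayleigh_density_nonneg)
  next
    show "((\<lambda>x. - exp (- x\<^sup>2 / \<Omega>)) \<longlongrightarrow> 0) at_top" using assms by real_asymp
  qed simp
  also have "\<dots> = ennreal (rayleigh_ccdf \<Omega> a)"
    by (simp add: rayleigh_ccdf_def a0_def)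
  finally show ?thesis .
qed

lemma nn_integral_rayleigh_greaterThan:
  assumes "\<Omega> > 0"
  shows "(\<integral>\<^sup>+x. ennreal (rayleigh_density \<Omega> x) * indicator {a<..} x \<partial>lborel) = ennreal (rayleigh_ccdf \<Omega> a)"
proof -
  have "(\<integral>\<^sup>+x. ennreal (rayleigh_density \<Omega> x) * indicator {a<..} x \<partial>lborel) =
        (\<integral>\<^sup>+x. ennreal (rayleigh_density \<Omega> x) * indicator {a..} x \<partial>lborel)"
    by (rule nn_integral_cong_AE)
      (use AE_lborel_singleton[of a] in \<open>auto elim!: eventually_mono split: split_indicator\<close>)
  then show ?thesis using nn_integral_rayleigh_atLeast[OF assms] by simp
qed

lemma nn_integral_rayleigh_density:
  assumes "\<Omega> > 0"
  shows "(\<integral>\<^sup>+x. ennreal (rayleigh_density \<Omega> x) \<partial>lborel) = 1"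
proof -
  have "(\<integral>\<^sup>+x. ennreal (rayleigh_density \<Omega> x) \<partial>lborel) =
        (\<integral>\<^sup>+x. ennreal (rayleigh_density \<Omega> x) * indicator {0..} x \<partial>lborel)"
    by (rule nn_integral_cong) (auto simp: rayleigh_density_def split: split_indicator)
  then show ?thesis using nn_integral_rayleigh_atLeast[OF assms, of 0] by (simp add: rayleigh_ccdf_def)
qed

lemma nn_integral_rayleigh_ccdf_atMost:
  assumes A: "\<Omega>A > 0" and B: "\<Omega>B > 0" and s: "s \<ge> 0"
  defines "\<Omega> \<equiv> rayleigh_min_scale \<Omega>A \<Omega>B"
  shows "(\<integral>\<^sup>+x. ennreal (rayleigh_density \<Omega>A x) * (indicator {..s} x * ennreal (rayleigh_ccdf \<Omega>B x)) \<partial>lborel)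
       = ennreal (\<Omega> / \<Omega>A * (1 - exp (- s\<^sup>2 / \<Omega>)))"
proof -
  have \<Omega>: "\<Omega> > 0" using A B by (simp add: \<Omega>_def rayleigh_min_scale_pos)
  let ?f = "\<lambda>x. 2 * x / \<Omega>A * exp (- x\<^sup>2 / \<Omega>)"
  let ?F = "\<lambda>x. - \<Omega> / \<Omega>A * exp (- x\<^sup>2 / \<Omega>)"
  have "(\<integral>\<^sup>+x. ennreal (rayleigh_density \<Omega>A x) * (indicator {..s} x * ennreal (rayleigh_ccdf \<Omega>B x)) \<partial>lborel)
      = (\<integral>\<^sup>+x. ennreal (?f x) * indicator {0..s} x \<partial>lborel)"
    using A B
    by (intro nn_integral_cong) (auto simp: rayleigh_density_def rayleigh_ccdf_def \<Omega>_def
        ennreal_mult'[symmetric] mult.assoc exp_rayleigh_min_scale split: split_indicator)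
  also have "\<dots> = ennreal (?F s - ?F 0)"
  proof (rule nn_integral_has_integral_lebesgue')
    show "\<And>x. x \<in> {0..s} \<Longrightarrow> 0 \<le> ?f x" using A by auto
    show "(?f has_integral (?F s - ?F 0)) {0..s}"
    proof (rule fundamental_theorem_of_calculus[OF s])
      fix x assume "x \<in> {0..s}"
      show "(?F has_vector_derivative ?f x) (at x within {0..s})"
        unfolding has_real_derivative_iff_has_vector_derivative[symmetric]
        using \<Omega> A by (auto intro!: derivative_eq_intros simp: field_simps power2_eq_square)
    qed
  qed
  also have "\<dots> = ennreal (\<Omega> / \<Omega>A * (1 - exp (- s\<^sup>2 / \<Omega>)))"
    by (simp add: algebra_simps)
  finally show ?thesis .
qed

lemma nn_integral_normal_density:
  assumes "\<sigma> > 0"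
  shows "(\<integral>\<^sup>+y. ennreal (normal_density 0 \<sigma> y) \<partial>lborel) = 1"
proof -
  interpret prob_space "density lborel (normal_density 0 \<sigma>)"
    using assms by (rule prob_space_normal_density)
  show ?thesis using emeasure_space_1 by (simp add: emeasure_density)
qed

lemma nn_integral_normal_density_neg_part:
  assumes \<sigma>: "\<sigma> > 0"
  shows "(\<integral>\<^sup>+y. ennreal (normal_density 0 \<sigma> y) * ennreal (max 0 (- y)) \<partial>lborel) = ennreal (\<sigma> / sqrt (2 * pi))"
proof -
  let ?g = "\<lambda>y. ennreal (normal_density 0 \<sigma> y) * ennreal (max 0 (- y))"
  let ?F = "\<lambda>y. - \<sigma>\<^sup>2 * normal_density 0 \<sigma> y"
  have "(\<integral>\<^sup>+y. ?g y \<partial>lborel) = (\<integral>\<^sup>+y. ?g y \<partial>distr lborel borel uminus)"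
    by (simp add: lborel_distr_uminus)
  also have "\<dots> = (\<integral>\<^sup>+y. ?g (- y) \<partial>lborel)"
    by (subst nn_integral_distr) (auto simp: normal_density_def)
  also have "\<dots> = (\<integral>\<^sup>+y. ennreal (normal_density 0 \<sigma> y * y) * indicator {0..} y \<partial>lborel)"
    by (rule nn_integral_cong)
      (auto simp: normal_density_def ennreal_mult'[symmetric] ennreal_eq_0_iff split: split_indicator
        intro!: divide_nonpos_nonneg mult_nonneg_nonpos)
  also have "\<dots> = ennreal (0 - ?F 0)"
  proof (rule nn_integral_FTC_atLeast[where F = ?F])
    fix x :: real assume x: "0 \<le> x"
    show "DERIV ?F x :> normal_density 0 \<sigma> x * x"
      using \<sigma> unfolding normal_density_def
      by (auto intro!: derivative_eq_intros simp: field_simps power2_eq_square)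
    show "0 \<le> normal_density 0 \<sigma> x * x" using x by simp
  next
    show "(?F \<longlongrightarrow> 0) at_top"
      using \<sigma> unfolding normal_density_def by real_asymp
  qed simp
  also have "ennreal (0 - ?F 0) = ennreal (\<sigma> / sqrt (2 * pi))"
    using \<sigma> by (simp add: normal_density_def real_sqrt_mult field_simps power2_eq_square)
  finally show ?thesis .
qed

lemma prob_space_link_law:
  assumes "\<Omega> > 0" "F > 0"
  shows "prob_space (link_law \<Omega> F)"
proof -
  interpret A: prob_space "density lborel (rayleigh_density \<Omega>)"
    by (rule prob_spaceI) (simp add: emeasure_density nn_integral_rayleigh_density assms)
  interpret B: prob_space "density lborel (normal_density 0 (pi * F * sqrt \<Omega>))"
    using assms by (intro prob_space_normal_density) simp
  interpret pair_prob_space "density lborel (rayleigh_density \<Omega>)"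
      "density lborel (normal_density 0 (pi * F * sqrt \<Omega>))" ..
  show ?thesis unfolding link_law_def by (rule prob_space_axioms)
qed

lemma sets_link_law[measurable_cong]: "sets (link_law \<Omega> F) = sets (borel \<Otimes>\<^sub>M borel)"
  unfolding link_law_def by (intro sets_pair_measure_cong) auto

lemma nn_integral_link_law:
  assumes "\<Omega> > 0" "F > 0"
    and [measurable]: "f \<in> borel_measurable borel" "g \<in> borel_measurable borel"
  shows "(\<integral>\<^sup>+p. f (fst p) * g (snd p) \<partial>link_law \<Omega> F) =
    (\<integral>\<^sup>+x. ennreal (rayleigh_density \<Omega> x) * f x \<partial>lborel) *
    (\<integral>\<^sup>+y. ennreal (normal_density 0 (pi * F * sqrt \<Omega>) y) * g y \<partial>lborel)"
proof -
  let ?A = "density lborel (rayleigh_density \<Omega>)"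
  let ?B = "density lborel (normal_density 0 (pi * F * sqrt \<Omega>))"
  interpret B: prob_space ?B
    using assms by (intro prob_space_normal_density) simp
  have "(\<integral>\<^sup>+p. f (fst p) * g (snd p) \<partial>link_law \<Omega> F) = (\<integral>\<^sup>+x. \<integral>\<^sup>+y. f x * g y \<partial>?B \<partial>?A)"
    unfolding link_law_def by (subst B.nn_integral_fst[symmetric]) auto
  also have "\<dots> = (\<integral>\<^sup>+x. f x * (\<integral>\<^sup>+y. g y \<partial>?B) \<partial>?A)"
    by (subst nn_integral_cmult) auto
  also have "\<dots> = (\<integral>\<^sup>+x. f x \<partial>?A) * (\<integral>\<^sup>+y. g y \<partial>?B)"
    by (subst nn_integral_multc) auto
  finally show ?thesis
    by (simp add: nn_integral_density)
qed

lemma nn_integral_link_law_fst: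
  assumes "\<Omega> > 0" "F > 0" and [measurable]: "f \<in> borel_measurable borel"
  shows "(\<integral>\<^sup>+p. f (fst p) \<partial>link_law \<Omega> F) = (\<integral>\<^sup>+x. ennreal (rayleigh_density \<Omega> x) * f x \<partial>lborel)"
  using nn_integral_link_law[OF assms, of "\<lambda>_. 1"] assms by (simp add: nn_integral_normal_density)

lemma pi_sqrt_div_eq: "\<Omega> > 0 \<Longrightarrow> pi * sqrt \<Omega> / (sqrt (2 * pi) * \<Omega>) = sqrt (2 * pi) / (2 * sqrt \<Omega>)"
proof -
  assume "\<Omega> > 0"
  then have "sqrt \<Omega> * sqrt \<Omega> = \<Omega>" "sqrt (2 * pi) * sqrt (2 * pi) = 2 * pi"
    by simp_all
  then show ?thesis using \<open>\<Omega> > 0\<close> by (simp add: field_simps)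
qed

text \<open>The part of Rice's integral contributed by link A being the smaller one; U x is the event
  that link B exceeds x, closed or open depending on how ties are broken.\<close>

lemma nn_integral_smaller_link_down_part:
  assumes pos: "\<Omega>A > 0" "FA > 0" "\<Omega>B > 0" "FB > 0" and s: "s \<ge> 0"
    and U: "\<And>x. (\<integral>\<^sup>+y. ennreal (rayleigh_density \<Omega>B y) * indicator (U x) y \<partial>lborel) = ennreal (rayleigh_ccdf \<Omega>B x)"
    and [measurable]: "\<And>x. U x \<in> sets borel"
  defines "\<Omega> \<equiv> rayleigh_min_scale \<Omega>A \<Omega>B"
  shows "(\<integral>\<^sup>+p. \<integral>\<^sup>+q. indicator {..s} (fst p) * indicator (U (fst p)) (fst q) * ennreal (max 0 (- snd p))
           \<partial>link_law \<Omega>B FB \<partial>link_law \<Omega>A FA)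
       = ennreal ((1 - exp (- s\<^sup>2 / \<Omega>)) * \<Omega> * FA * sqrt (2 * pi) / (2 * sqrt \<Omega>A))"
proof -
  have inner: "(\<integral>\<^sup>+q. indicator {..s} (fst p) * indicator (U (fst p)) (fst q) * ennreal (max 0 (- snd p)) \<partial>link_law \<Omega>B FB)
     = indicator {..s} (fst p) * ennreal (rayleigh_ccdf \<Omega>B (fst p)) * ennreal (max 0 (- snd p))" for p
  proof -
    have "(\<integral>\<^sup>+q. indicator {..s} (fst p) * indicator (U (fst p)) (fst q) * ennreal (max 0 (- snd p)) \<partial>link_law \<Omega>B FB)
      = indicator {..s} (fst p) * ennreal (max 0 (- snd p)) * (\<integral>\<^sup>+q. indicator (U (fst p)) (fst q) \<partial>link_law \<Omega>B FB)"
      by (subst nn_integral_cmult[symmetric]) (auto simp: ac_simps)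
    then show ?thesis by (simp add: nn_integral_link_law_fst pos U ac_simps)
  qed
  have "(\<integral>\<^sup>+p. \<integral>\<^sup>+q. indicator {..s} (fst p) * indicator (U (fst p)) (fst q) * ennreal (max 0 (- snd p))
           \<partial>link_law \<Omega>B FB \<partial>link_law \<Omega>A FA)
      = ennreal (\<Omega> / \<Omega>A * (1 - exp (- s\<^sup>2 / \<Omega>))) * ennreal (pi * FA * sqrt \<Omega>A / sqrt (2 * pi))"
    using pos s unfolding inner \<Omega>_def
    by (subst nn_integral_link_law)
      (auto simp: nn_integral_rayleigh_ccdf_atMost nn_integral_normal_density_neg_part[simplified])
  also have "\<dots> = ennreal (\<Omega> / \<Omega>A * (1 - exp (- s\<^sup>2 / \<Omega>)) * (pi * FA * sqrt \<Omega>A / sqrt (2 * pi)))"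
    using pos by (subst ennreal_mult'') (auto simp: \<Omega>_def rayleigh_min_scale_pos)
  also have "\<Omega> / \<Omega>A * (1 - exp (- s\<^sup>2 / \<Omega>)) * (pi * FA * sqrt \<Omega>A / sqrt (2 * pi))
      = (1 - exp (- s\<^sup>2 / \<Omega>)) * \<Omega> * FA * (pi * sqrt \<Omega>A / (sqrt (2 * pi) * \<Omega>A))"
    by (simp add: field_simps)
  finally show ?thesis using pos by (simp add: pi_sqrt_div_eq)
qed

subsection \<open>The minimum of two independent links\<close>

definition link_min :: "(real \<times> real) \<times> (real \<times> real) \<Rightarrow> real \<times> real" where
  "link_min = (\<lambda>((x1, y1), (x2, y2)). (min x1 x2, if x1 \<le> x2 then y1 else y2))"

lemma link_min_eq:
  "link_min z = (min (fst (fst z)) (fst (snd z)),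
                 if fst (fst z) \<le> fst (snd z) then snd (fst z) else snd (snd z))"
  by (auto simp: link_min_def split: prod.splits)

lemma relay_law_eq:
  "relay_law \<Omega> F i = distr (link_law (\<Omega> i SR) (F i SR) \<Otimes>\<^sub>M link_law (\<Omega> i RD) (F i RD)) borel link_min"
  unfolding relay_law_def link_min_def by simp

lemma measurable_link_min[measurable]: "link_min \<in> (borel \<Otimes>\<^sub>M borel) \<Otimes>\<^sub>M (borel \<Otimes>\<^sub>M borel) \<rightarrow>\<^sub>M borel"
proof -
  have "(\<lambda>z. link_min z) \<in> (borel \<Otimes>\<^sub>M borel) \<Otimes>\<^sub>M (borel \<Otimes>\<^sub>M borel) \<rightarrow>\<^sub>M borel \<Otimes>\<^sub>M borel"
    unfolding link_min_eq by measurable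
  then show ?thesis by (simp add: borel_prod)
qed

lemma borel_measurable_indicator_atLeast[measurable (raw)]:
  fixes f g :: "'a \<Rightarrow> real"
  assumes [measurable]: "f \<in> borel_measurable M" "g \<in> borel_measurable M"
  shows "(\<lambda>z. indicator {f z..} (g z) :: ennreal) \<in> borel_measurable M"
  unfolding indicator_def atLeast_iff by measurable

lemma borel_measurable_indicator_greaterThan[measurable (raw)]:
  fixes f g :: "'a \<Rightarrow> real"
  assumes [measurable]: "f \<in> borel_measurable M" "g \<in> borel_measurable M"
  shows "(\<lambda>z. indicator {f z<..} (g z) :: ennreal) \<in> borel_measurable M"
  unfolding indicator_def greaterThan_iff by measurable

context
  fixes \<Omega>A \<Omega>B FA FB :: real
  assumes pos: "\<Omega>A > 0" "\<Omega>B > 0" "FA > 0" "FB > 0"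
begin

interpretation LA: prob_space "link_law \<Omega>A FA" using pos by (intro prob_space_link_law)
interpretation LB: prob_space "link_law \<Omega>B FB" using pos by (intro prob_space_link_law)
interpretation pair_prob_space "link_law \<Omega>A FA" "link_law \<Omega>B FB" ..

lemma measure_link_min_above:
  "measure (distr (link_law \<Omega>A FA \<Otimes>\<^sub>M link_law \<Omega>B FB) borel link_min) {p. fst p > th}
    = rayleigh_ccdf (rayleigh_min_scale \<Omega>A \<Omega>B) th"
proof -
  let ?M = "link_law \<Omega>A FA \<Otimes>\<^sub>M link_law \<Omega>B FB"
  have [measurable]: "{p::real \<times> real. fst p > th} \<in> sets borel"
    by (simp add: open_Collect_less continuous_intros)
  have "emeasure (distr ?M borel link_min) {p. fst p > th} = (\<integral>\<^sup>+p. indicator {p. fst p > th} p \<partial>distr ?M borel link_min)"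
    by simp
  also have "\<dots> = (\<integral>\<^sup>+z. indicator {p. fst p > th} (link_min z) \<partial>?M)"
    by (subst nn_integral_distr) auto
  also have "\<dots> = (\<integral>\<^sup>+z. indicator {th<..} (fst (fst z)) * indicator {th<..} (fst (snd z)) \<partial>?M)"
    by (intro nn_integral_cong) (auto simp: link_min_eq split: split_indicator)
  also have "\<dots> = (\<integral>\<^sup>+p. \<integral>\<^sup>+q. indicator {th<..} (fst p) * indicator {th<..} (fst q) \<partial>link_law \<Omega>B FB \<partial>link_law \<Omega>A FA)"
    by (subst LB.nn_integral_fst[symmetric]) auto
  also have "\<dots> = ennreal (rayleigh_ccdf \<Omega>A th) * ennreal (rayleigh_ccdf \<Omega>B th)"
    using pos by (simp add: nn_integral_cmult nn_integral_multc nn_integral_link_law_fst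
        nn_integral_rayleigh_greaterThan)
  finally show ?thesis
    using pos by (simp add: measure_def rayleigh_ccdf_mult ennreal_mult[symmetric] rayleigh_ccdf_nonneg)
qed

lemma integral_link_min_down_part:
  assumes s: "s \<ge> 0"
  defines "\<Omega> \<equiv> rayleigh_min_scale \<Omega>A \<Omega>B"
  shows "(\<integral>p. indicator {..s} (fst p) * max 0 (- snd p) \<partial>distr (link_law \<Omega>A FA \<Otimes>\<^sub>M link_law \<Omega>B FB) borel link_min)
    = (1 - exp (- s\<^sup>2 / \<Omega>)) * \<Omega> * sqrt (2 * pi) / 2 * (FA / sqrt \<Omega>A + FB / sqrt \<Omega>B)"
proof -
  let ?M = "link_law \<Omega>A FA \<Otimes>\<^sub>M link_law \<Omega>B FB"
  let ?down = "\<lambda>z. ennreal (indicator {..s} (fst (link_min z)) * max 0 (- snd (link_min z)))"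
  let ?A = "(1 - exp (- s\<^sup>2 / \<Omega>)) * \<Omega> * FA * sqrt (2 * pi) / (2 * sqrt \<Omega>A)"
  let ?B = "(1 - exp (- s\<^sup>2 / \<Omega>)) * \<Omega> * FB * sqrt (2 * pi) / (2 * sqrt \<Omega>B)"
  have \<Omega>: "\<Omega> > 0" using pos by (simp add: \<Omega>_def rayleigh_min_scale_pos)
  have "?A \<ge> 0" "?B \<ge> 0" using pos \<Omega> by auto
  have "(\<lambda>p::real \<times> real. indicator {..s} (fst p) * max 0 (- snd p) :: real) \<in> borel_measurable (borel \<Otimes>\<^sub>M borel)"
    by measurable
  then have [measurable]: "(\<lambda>p::real \<times> real. indicator {..s} (fst p) * max 0 (- snd p) :: real) \<in> borel_measurable borel"
    by (simp add: borel_prod)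
  have "(\<integral>p. indicator {..s} (fst p) * max 0 (- snd p) \<partial>distr ?M borel link_min) = enn2real (\<integral>\<^sup>+z. ?down z \<partial>?M)"
    by (subst integral_distr) (auto intro!: integral_eq_nn_integral)
  also have "(\<integral>\<^sup>+z. ?down z \<partial>?M)
     = (\<integral>\<^sup>+z. indicator {..s} (fst (fst z)) * indicator {fst (fst z)..} (fst (snd z)) * ennreal (max 0 (- snd (fst z)))
          + indicator {..s} (fst (snd z)) * indicator {fst (snd z)<..} (fst (fst z)) * ennreal (max 0 (- snd (snd z))) \<partial>?M)"
    by (intro nn_integral_cong) (auto simp: link_min_eq min_def split: split_indicator)
  also have "\<dots> = (\<integral>\<^sup>+z. indicator {..s} (fst (fst z)) * indicator {fst (fst z)..} (fst (snd z)) * ennreal (max 0 (- snd (fst z))) \<partial>?M)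
        + (\<integral>\<^sup>+z. indicator {..s} (fst (snd z)) * indicator {fst (snd z)<..} (fst (fst z)) * ennreal (max 0 (- snd (snd z))) \<partial>?M)"
    by (intro nn_integral_add) auto
  also have "\<dots> = ennreal ?A + ennreal ?B"
  proof -
    have "(\<integral>\<^sup>+z. indicator {..s} (fst (fst z)) * indicator {fst (fst z)..} (fst (snd z)) * ennreal (max 0 (- snd (fst z))) \<partial>?M)
        = (\<integral>\<^sup>+p. \<integral>\<^sup>+q. indicator {..s} (fst p) * indicator {fst p..} (fst q) * ennreal (max 0 (- snd p))
             \<partial>link_law \<Omega>B FB \<partial>link_law \<Omega>A FA)"
      by (subst LB.nn_integral_fst[symmetric]) auto
    also have "\<dots> = ennreal ?A"
      using nn_integral_smaller_link_down_part[OF pos(1,3,2,4) s nn_integral_rayleigh_atLeast[OF pos(2)]]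
      by (simp add: \<Omega>_def)
    finally have A: "(\<integral>\<^sup>+z. indicator {..s} (fst (fst z)) * indicator {fst (fst z)..} (fst (snd z)) * ennreal (max 0 (- snd (fst z))) \<partial>?M) = ennreal ?A" .
    have "(\<integral>\<^sup>+z. indicator {..s} (fst (snd z)) * indicator {fst (snd z)<..} (fst (fst z)) * ennreal (max 0 (- snd (snd z))) \<partial>?M)
        = (\<integral>\<^sup>+q. \<integral>\<^sup>+p. indicator {..s} (fst q) * indicator {fst q<..} (fst p) * ennreal (max 0 (- snd q))
             \<partial>link_law \<Omega>A FA \<partial>link_law \<Omega>B FB)"
      by (subst nn_integral_snd[symmetric]) auto
    also have "\<dots> = ennreal ?B"
      using nn_integral_smaller_link_down_part[OF pos(2,4,1,3) s nn_integral_rayleigh_greaterThan[OF pos(1)]]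
      by (simp add: \<Omega>_def rayleigh_min_scale_commute[of \<Omega>B])
    finally show ?thesis using A by simp
  qed
  finally have "(\<integral>p. indicator {..s} (fst p) * max 0 (- snd p) \<partial>distr ?M borel link_min) = ?A + ?B"
    using \<open>?A \<ge> 0\<close> \<open>?B \<ge> 0\<close> by (simp add: ennreal_plus[symmetric] del: ennreal_plus)
  also have "?A + ?B = (1 - exp (- s\<^sup>2 / \<Omega>)) * \<Omega> * sqrt (2 * pi) / 2 * (FA / sqrt \<Omega>A + FB / sqrt \<Omega>B)"
    using pos by (simp add: field_simps)
  finally show ?thesis .
qed

lemma down_lcr_link_min:
  assumes r: "r > 0"
  shows "down_lcr (distr (link_law \<Omega>A FA \<Otimes>\<^sub>M link_law \<Omega>B FB) borel link_min) r =
    sqrt (2 * pi) * r * (FA / sqrt \<Omega>A + FB / sqrt \<Omega>B) * exp (- r\<^sup>2 / rayleigh_min_scale \<Omega>A \<Omega>B)"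
proof -
  define \<Omega> where "\<Omega> = rayleigh_min_scale \<Omega>A \<Omega>B"
  have \<Omega>: "\<Omega> > 0" using pos by (simp add: \<Omega>_def rayleigh_min_scale_pos)
  define K where "K = \<Omega> * sqrt (2 * pi) / 2 * (FA / sqrt \<Omega>A + FB / sqrt \<Omega>B)"
  have "eventually (\<lambda>s. s \<in> {0<..}) (nhds r)" using r by (intro eventually_nhds_in_open) auto
  then have ev: "eventually (\<lambda>s. (\<integral>p. indicator {..s} (fst p) * max 0 (- snd p)
      \<partial>distr (link_law \<Omega>A FA \<Otimes>\<^sub>M link_law \<Omega>B FB) borel link_min) = (1 - exp (- s\<^sup>2 / \<Omega>)) * K) (nhds r)"
    by eventually_elim (simp add: integral_link_min_down_part \<Omega>_def K_def)
  have "DERIV (\<lambda>s. (1 - exp (- s\<^sup>2 / \<Omega>)) * K) r :> exp (- r\<^sup>2 / \<Omega>) * (2 * r / \<Omega>) * K"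
    using \<Omega> by (auto intro!: derivative_eq_intros simp: field_simps power2_eq_square)
  then have "down_lcr (distr (link_law \<Omega>A FA \<Otimes>\<^sub>M link_law \<Omega>B FB) borel link_min) r
      = exp (- r\<^sup>2 / \<Omega>) * (2 * r / \<Omega>) * K"
    unfolding down_lcr_def by (intro DERIV_imp_deriv) (subst DERIV_cong_ev[OF refl ev refl])
  also have "\<dots> = sqrt (2 * pi) * r * (FA / sqrt \<Omega>A + FB / sqrt \<Omega>B) * exp (- r\<^sup>2 / \<Omega>)"
    using \<Omega> by (simp add: K_def field_simps)
  finally show ?thesis by (simp add: \<Omega>_def)
qed

end

lemma above_prob_eq:
  assumes "\<And>i h. \<Omega> i h > 0" "\<And>i h. F i h > 0"
  shows "above_prob \<Omega> F th i = rayleigh_ccdf (rayleigh_min_scale (\<Omega> i SR) (\<Omega> i RD)) th"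
  unfolding above_prob_def relay_law_eq using assms by (simp add: measure_link_min_above)

lemma down_lcr_relay_law:
  assumes "\<And>i h. \<Omega> i h > 0" "\<And>i h. F i h > 0" and "r > 0"
  shows "down_lcr (relay_law \<Omega> F i) r =
    sqrt (2 * pi) * r * (F i SR / sqrt (\<Omega> i SR) + F i RD / sqrt (\<Omega> i RD))
      * exp (- r\<^sup>2 / rayleigh_min_scale (\<Omega> i SR) (\<Omega> i RD))"
  unfolding relay_law_eq using assms by (simp add: down_lcr_link_min)

subsection \<open>The stationary distribution of DSSC-B\<close>

lemma UNIV_dssc_state: "(UNIV :: dssc_state set) =
  {(R1,True,True), (R1,True,False), (R1,False,True), (R1,False,False),
   (R2,True,True), (R2,True,False), (R2,False,True), (R2,False,False)}"
  by (auto intro: relay.exhaust)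

lemma sum_UNIV_dssc_state: "(\<Sum>x\<in>UNIV. f x :: real) =
  f (R1,True,True) + f (R1,True,False) + f (R1,False,True) + f (R1,False,False) +
  f (R2,True,True) + f (R2,True,False) + f (R2,False,True) + f (R2,False,False)"
  unfolding UNIV_dssc_state by (simp add: algebra_simps)

lemma sum_UNIV_bool_pair: "(\<Sum>s\<in>UNIV. f s :: real) = f (True,True) + f (True,False) + f (False,True) + f (False,False)"
proof -
  have UNIV_eq: "(UNIV :: (bool \<times> bool) set) = {(True,True), (True,False), (False,True), (False,False)}"
    by auto
  show ?thesis unfolding UNIV_eq by (simp add: algebra_simps)
qed

text \<open>u_b (resp. v_b) is the stationary mass of the states in which R_b is active next and the
  current sample of a_b lies above (resp. below) the threshold.\<close>

lemma dssc_stationary_balance: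
  fixes q :: "relay \<Rightarrow> real" and \<pi> :: "dssc_state \<Rightarrow> real"
  assumes st: "\<And>y. \<pi> y = (\<Sum>x\<in>UNIV. \<pi> x * dssc_trans q x y)"
  defines "u1 \<equiv> \<pi> (R1,True,True) + \<pi> (R1,True,False)"
    and "v1 \<equiv> \<pi> (R1,False,True) + \<pi> (R1,False,False)"
    and "u2 \<equiv> \<pi> (R2,True,True) + \<pi> (R2,False,True)"
    and "v2 \<equiv> \<pi> (R2,True,False) + \<pi> (R2,False,False)"
  shows "u1 = q R1 * (u1 + v1 + (1 - q R2) * u2)"
    and "v1 = (1 - q R1) * (v1 + (1 - q R2) * u2)"
    and "u2 = q R2 * (u2 + v2 + (1 - q R1) * u1)"
    and "v2 = (1 - q R2) * (v2 + (1 - q R1) * u1)"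
proof -
  note trans = sum_UNIV_dssc_state dssc_trans_def bern_def ind_def dssc_next_def algebra_simps
  have E1: "\<pi> (R1,True,True) = q R1 * q R2 * (u1 + v1)"
    using st[of "(R1,True,True)"] by (simp add: trans u1_def v1_def)
  have E2: "\<pi> (R1,True,False) = q R1 * (1 - q R2) * (u1 + v1 + u2)"
    using st[of "(R1,True,False)"] by (simp add: trans u1_def v1_def u2_def)
  have E3: "\<pi> (R1,False,True) = (1 - q R1) * q R2 * v1"
    using st[of "(R1,False,True)"] by (simp add: trans v1_def)
  have E4: "\<pi> (R1,False,False) = (1 - q R1) * (1 - q R2) * (v1 + u2)"
    using st[of "(R1,False,False)"] by (simp add: trans v1_def u2_def)
  have E5: "\<pi> (R2,True,True) = q R1 * q R2 * (u2 + v2)"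
    using st[of "(R2,True,True)"] by (simp add: trans u2_def v2_def)
  have E6: "\<pi> (R2,False,True) = (1 - q R1) * q R2 * (u2 + v2 + u1)"
    using st[of "(R2,False,True)"] by (simp add: trans u1_def u2_def v2_def)
  have E7: "\<pi> (R2,True,False) = q R1 * (1 - q R2) * v2"
    using st[of "(R2,True,False)"] by (simp add: trans v2_def)
  have E8: "\<pi> (R2,False,False) = (1 - q R1) * (1 - q R2) * (v2 + u1)"
    using st[of "(R2,False,False)"] by (simp add: trans u1_def v2_def)
  have "\<pi> (R1,True,True) + \<pi> (R1,True,False) = q R1 * (u1 + v1 + (1 - q R2) * u2)"
    unfolding E1 E2 by (simp add: algebra_simps)
  then show "u1 = q R1 * (u1 + v1 + (1 - q R2) * u2)" by (simp only: u1_def)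
  have "\<pi> (R1,False,True) + \<pi> (R1,False,False) = (1 - q R1) * (v1 + (1 - q R2) * u2)"
    unfolding E3 E4 by (simp add: algebra_simps)
  then show "v1 = (1 - q R1) * (v1 + (1 - q R2) * u2)" by (simp only: v1_def)
  have "\<pi> (R2,True,True) + \<pi> (R2,False,True) = q R2 * (u2 + v2 + (1 - q R1) * u1)"
    unfolding E5 E6 by (simp add: algebra_simps)
  then show "u2 = q R2 * (u2 + v2 + (1 - q R1) * u1)" by (simp only: u2_def)
  have "\<pi> (R2,True,False) + \<pi> (R2,False,False) = (1 - q R2) * (v2 + (1 - q R1) * u1)"
    unfolding E7 E8 by (simp add: algebra_simps)
  then show "v2 = (1 - q R2) * (v2 + (1 - q R1) * u1)" by (simp only: v2_def)
qed

lemma dssc_balance_solution: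
  fixes a b u1 v1 u2 v2 :: real
  assumes a: "a > 1" and b: "b > 1"
    and eu1: "u1 = 1 / a * (u1 + v1 + (1 - 1 / b) * u2)"
    and ev1: "v1 = (1 - 1 / a) * (v1 + (1 - 1 / b) * u2)"
    and ev2: "v2 = (1 - 1 / b) * (v2 + (1 - 1 / a) * u1)"
    and tot: "u1 + v1 + u2 + v2 = 1"
  shows "u1 + v1 = (b - 1) * (a\<^sup>2 - a + 1) / ((a - 1) * (b - 1) * (a + b) + (a - 1) + (b - 1))"
proof -
  define d where "d = (a - 1) * (b - 1) * (a + b) + (a - 1) + (b - 1)"
  have d: "d > 0"
    unfolding d_def using a b by (intro add_pos_pos mult_pos_pos) auto
  have flow: "(1 - 1 / a) * u1 = (1 - 1 / b) * u2"
    using eu1 ev1 by (simp add: algebra_simps)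
  then have U2: "a * (b - 1) * u2 = (a - 1) * b * u1"
    using a b by (simp add: field_simps)
  have "v1 / a = (1 - 1 / a) * ((1 - 1 / b) * u2)"
    using ev1 a by (simp add: field_simps)
  also have "\<dots> = (1 - 1 / a) * ((1 - 1 / a) * u1)"
    by (simp only: flow)
  finally have V1: "a * v1 = (a - 1)\<^sup>2 * u1"
    using a by (simp add: field_simps power2_eq_square)
  have V2: "a * v2 = (a - 1) * (b - 1) * u1"
    using ev2 a b by (simp add: field_simps)
  have "a * (b - 1) = a * (b - 1) * (u1 + v1 + u2 + v2)"
    by (simp add: tot)
  also have "\<dots> = a * (b - 1) * u1 + (b - 1) * (a * v1) + a * (b - 1) * u2 + (b - 1) * (a * v2)"
    by (simp add: algebra_simps)
  also have "\<dots> = u1 * d"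
    unfolding U2 V1 V2 d_def by (simp add: algebra_simps power2_eq_square)
  finally have U1: "u1 = a * (b - 1) / d"
    using d by (simp add: field_simps)
  have "u1 + v1 = (a\<^sup>2 - a + 1) * u1 / a"
    using V1 a by (simp add: field_simps power2_eq_square)
  also have "\<dots> = (b - 1) * (a\<^sup>2 - a + 1) / d"
    unfolding U1 using a d by (simp add: field_simps)
  finally show ?thesis by (simp add: d_def)
qed

lemma dssc_stationary_relay_prob:
  fixes q :: "relay \<Rightarrow> real" and \<pi> :: "dssc_state \<Rightarrow> real"
  assumes a: "a > 1" and b: "b > 1" and q: "q R1 = 1 / a" "q R2 = 1 / b"
    and st: "\<And>y. \<pi> y = (\<Sum>x\<in>UNIV. \<pi> x * dssc_trans q x y)" and tot: "(\<Sum>x\<in>UNIV. \<pi> x) = 1"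
  defines "d \<equiv> (a - 1) * (b - 1) * (a + b) + (a - 1) + (b - 1)"
  shows "(\<Sum>s\<in>UNIV. \<pi> (R1, s)) = (b - 1) * (a\<^sup>2 - a + 1) / d"
    and "(\<Sum>s\<in>UNIV. \<pi> (R2, s)) = (a - 1) * (b\<^sup>2 - b + 1) / d"
proof -
  note bal = dssc_stationary_balance[OF st, unfolded q]
  have tot': "(\<pi> (R1,True,True) + \<pi> (R1,True,False)) + (\<pi> (R1,False,True) + \<pi> (R1,False,False))
      + (\<pi> (R2,True,True) + \<pi> (R2,False,True)) + (\<pi> (R2,True,False) + \<pi> (R2,False,False)) = 1"
    using tot by (simp add: sum_UNIV_dssc_state algebra_simps)
  show "(\<Sum>s\<in>UNIV. \<pi> (R1, s)) = (b - 1) * (a\<^sup>2 - a + 1) / d"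
    using dssc_balance_solution[OF a b bal(1) bal(2) bal(4) tot']
    by (simp add: sum_UNIV_bool_pair d_def algebra_simps)
  show "(\<Sum>s\<in>UNIV. \<pi> (R2, s)) = (a - 1) * (b\<^sup>2 - b + 1) / d"
    using dssc_balance_solution[OF b a bal(3) bal(4) bal(2)] tot'
    by (simp add: sum_UNIV_bool_pair d_def algebra_simps)
qed

lemma dssc_switching_rate_eq:
  assumes pos: "\<And>i h. \<Omega> i h > 0" "\<And>i h. F i h > 0" and \<Gamma>: "\<Gamma> > 0" and T: "T > 0"
    and stat: "dssc_stationary \<Omega> F \<Gamma> T \<pi>"
  defines "e \<equiv> \<lambda>i. exp (T / (\<Gamma> * rayleigh_min_scale (\<Omega> i SR) (\<Omega> i RD)))"
    and "c \<equiv> \<lambda>i. sqrt (T / (\<Gamma> * \<Omega> i SR)) * F i SR + sqrt (T / (\<Gamma> * \<Omega> i RD)) * F i RD"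
  shows "dssc_switching_rate \<Omega> F \<Gamma> T \<pi> = sqrt (2 * pi) *
      ((e R2 - 1) * ((e R1)\<^sup>2 - e R1 + 1) * c R1 / e R1 + (e R1 - 1) * ((e R2)\<^sup>2 - e R2 + 1) * c R2 / e R2)
      / ((e R1 - 1) * (e R2 - 1) * (e R1 + e R2) + (e R1 - 1) + (e R2 - 1))"
proof -
  define th where "th = sqrt (T / \<Gamma>)"
  define \<omega> where "\<omega> i = rayleigh_min_scale (\<Omega> i SR) (\<Omega> i RD)" for i
  have \<omega>: "\<omega> i > 0" for i using pos by (simp add: \<omega>_def rayleigh_min_scale_pos)
  have e: "e i > 1" for i using \<omega> \<Gamma> T by (simp add: e_def \<omega>_def[symmetric])
  have th: "th > 0" "th\<^sup>2 = T / \<Gamma>" using \<Gamma> T by (simp_all add: th_def)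
  have q: "above_prob \<Omega> F th i = 1 / e i" for i
    using th \<omega> pos by (simp add: above_prob_eq rayleigh_ccdf_def \<omega>_def[symmetric] e_def exp_minus' mult.commute)
  have lcr: "down_lcr (relay_law \<Omega> F i) th = sqrt (2 * pi) * c i / e i" for i
    using th \<omega> pos \<Gamma> T by (simp add: down_lcr_relay_law \<omega>_def[symmetric] e_def c_def exp_minus' th_def
        real_sqrt_divide real_sqrt_mult field_simps)
  have st: "\<And>y. \<pi> y = (\<Sum>x\<in>UNIV. \<pi> x * dssc_trans (above_prob \<Omega> F th) x y)"
    and tot: "(\<Sum>x\<in>UNIV. \<pi> x) = 1"
    using stat unfolding dssc_stationary_def th_def by auto
  note P = dssc_stationary_relay_prob[OF e e q q st tot]
  show ?thesis
    unfolding dssc_switching_rate_def th_def[symmetric]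
    by (simp add: UNIV_relay lcr P algebra_simps add_divide_distrib)
qed

theorem theorem3:
  fixes \<Omega> F :: "relay \<Rightarrow> hop \<Rightarrow> real" and \<Gamma> T :: real and \<pi> :: "dssc_state \<Rightarrow> real"
  assumes "\<And>i h. \<Omega> i h > 0" and "\<And>i h. F i h > 0" and "\<Gamma> > 0" and "T > 0"
    and "dssc_stationary \<Omega> F \<Gamma> T \<pi>"
  shows "let O1 = \<Omega> R1 SR * \<Omega> R1 RD / (\<Omega> R1 SR + \<Omega> R1 RD);
             O2 = \<Omega> R2 SR * \<Omega> R2 RD / (\<Omega> R2 SR + \<Omega> R2 RD);
             c1 = sqrt (T / (\<Gamma> * \<Omega> R1 SR)) * F R1 SR + sqrt (T / (\<Gamma> * \<Omega> R1 RD)) * F R1 RD;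
             c2 = sqrt (T / (\<Gamma> * \<Omega> R2 SR)) * F R2 SR + sqrt (T / (\<Gamma> * \<Omega> R2 RD)) * F R2 RD;
             E = exp (- (T * (O1 + O2) / (\<Gamma> * O1 * O2)));
             \<Delta> = 2 * exp (T / (\<Gamma> * O1)) - exp (2 * T / (\<Gamma> * O1))
                 + 2 * exp (T / (\<Gamma> * O2)) - exp (2 * T / (\<Gamma> * O2))
                 - 2 * exp (T * (O1 + O2) / (\<Gamma> * O1 * O2))
                 + exp (T * (O1 + 2 * O2) / (\<Gamma> * O1 * O2))
                 + exp (T * (2 * O1 + O2) / (\<Gamma> * O1 * O2)) - 2
         in dssc_switching_rate \<Omega> F \<Gamma> T \<pi> =
              sqrt (2 * pi) / \<Delta> *
                (E * (exp (2 * T / (\<Gamma> * O2)) - exp (T / (\<Gamma> * O2))) * c1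
                 + E * (exp (2 * T / (\<Gamma> * O1)) - exp (T / (\<Gamma> * O1))) * c2
                 + (c1 + c2) * (exp (T / (\<Gamma> * O1)) - 1) * (exp (T / (\<Gamma> * O2)) - 1))"
proof -
  define \<omega> where "\<omega> i = rayleigh_min_scale (\<Omega> i SR) (\<Omega> i RD)" for i
  define c where "c i = sqrt (T / (\<Gamma> * \<Omega> i SR)) * F i SR + sqrt (T / (\<Gamma> * \<Omega> i RD)) * F i RD" for i
  define e where "e i = exp (T / (\<Gamma> * \<omega> i))" for i
  have \<omega>: "\<omega> i > 0" for i using assms(1) by (simp add: \<omega>_def rayleigh_min_scale_pos)
  have e: "e i > 1" for i using \<omega> assms(3,4) by (simp add: e_def)
  define d where "d = (e R1 - 1) * (e R2 - 1) * (e R1 + e R2) + (e R1 - 1) + (e R2 - 1)"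
  have d: "d > 0"
    unfolding d_def using e[of R1] e[of R2] by (intro add_pos_pos mult_pos_pos) auto
  have \<omega>_eq: "\<Omega> i SR * \<Omega> i RD / (\<Omega> i SR + \<Omega> i RD) = \<omega> i" for i
    by (simp add: \<omega>_def rayleigh_min_scale_def)
  have exp_eq: "exp (2 * T / (\<Gamma> * \<omega> i)) = (e i)\<^sup>2"
      "exp (T * (\<omega> R1 + \<omega> R2) / (\<Gamma> * \<omega> R1 * \<omega> R2)) = e R1 * e R2"
      "exp (T * (\<omega> R1 + 2 * \<omega> R2) / (\<Gamma> * \<omega> R1 * \<omega> R2)) = (e R1)\<^sup>2 * e R2"
      "exp (T * (2 * \<omega> R1 + \<omega> R2) / (\<Gamma> * \<omega> R1 * \<omega> R2)) = e R1 * (e R2)\<^sup>2"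
      "exp (- (T * (\<omega> R1 + \<omega> R2) / (\<Gamma> * \<omega> R1 * \<omega> R2))) = 1 / (e R1 * e R2)" for i
    using \<omega>[of R1] \<omega>[of R2] \<omega>[of i] assms(3)
    by (simp_all add: e_def exp_minus' exp_add[symmetric] power2_eq_square field_simps)
  have \<Delta>: "2 * e R1 - (e R1)\<^sup>2 + 2 * e R2 - (e R2)\<^sup>2 - 2 * (e R1 * e R2) + (e R1)\<^sup>2 * e R2 + e R1 * (e R2)\<^sup>2 - 2
      = d"
    by (simp add: d_def algebra_simps power2_eq_square)
  show ?thesis
    unfolding Let_def \<omega>_eq c_def[symmetric] exp_eq e_def[symmetric] \<Delta>
      dssc_switching_rate_eq[OF assms, folded \<omega>_def e_def c_def, folded d_def]
    using e[of R1] e[of R2] d by (simp add: field_simps power2_eq_square)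
qed

end
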